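(* Let $\mathcal A\in\mathbb R^{n\times n\times l}$, $\mathcal X\in\mathbb R^{n\times p\times l}$, $\mathcal B\in\mathbb R^{p\times p\times l}$ and $\mathcal C\in\mathbb R^{n\times p\times l}$. The analytical solution of the t-Sylvester equation $$\mathcal A*\mathcal X+\mathcal X*\mathcal B=\mathcal C$$ is given by $$\operatorname{vec}(\mathcal X)=\big(\widetilde{\operatorname{bcirc}}(\mathcal B)^\top\otimes I_n+[I_p]_{l\times l}\odot\operatorname{bcirc}(\mathcal A)\big)^{\dagger}\operatorname{vec}(\mathcal C).$$
   Context: Frontal slices $A^{(i)}=\mathcal A(:,:,i)$. $\operatorname{bcirc}(\mathcal A)$ is the block circulant matrix whose $(i,j)$ block is $A^{(((i-j)\bmod l)+1)}$; $\widetilde{\operatorname{bcirc}}(\mathcal B)$ is the block matrix whose $(i,j)$ block is $B^{(((j-i)\bmod l)+1)}$ (first block row $B^{(1)},B^{(2)},\dots,B^{(l)}$). The t-product is $\mathcal A*\mathcal B=\operatorname{fold}(\operatorname{bcirc}(\mathcal A)\operatorname{unfold}(\mathcal B))$, with $\operatorname{unfold}$ stacking frontal slices vertically and $\operatorname{fold}$ its inverse. $\operatorname{vec}(\mathcal C)=\mathcal C(:)$ is the column-major vectorization (columns of $C^{(1)}$, then of $C^{(2)}$, and so on). $[I_p]_{l\times l}$ is the $pl\times pl$ block matrix all of whose $p\times p$ blocks are $I_p$. For block matrices $M=[M_{ij}]$ and $N=[N_{ij}]$, both partitioned into $l\times l$ blocks (here $\operatorname{bcirc}(\mathcal A)$ into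 $n\times n$ blocks), the Khatri–Rao product $M\odot N$ is the block matrix with $(i,j)$ block $M_{ij}\otimes N_{ij}$. $\otimes$ is the Kronecker product and $\dagger$ the Moore–Penrose inverse. *)

theory Defs
  imports "Jordan_Normal_Form.Matrix"
begin

text \<open>Third-order real tensors are represented by the list of their frontal slices
  (slice k of the list is the paper's A^(k+1)); all indices are 0-based.\<close>

type_synonym tensor = "real mat list"

definition is_tensor :: "nat \<Rightarrow> nat \<Rightarrow> nat \<Rightarrow> tensor \<Rightarrow> bool" where
  "is_tensor m k l T \<longleftrightarrow> length T = l \<and> (\<forall>i<l. T ! i \<in> carrier_mat m k)"

definition bcirc :: "tensor \<Rightarrow> real mat" where
  "bcirc A = (let m = dim_row (A ! 0); k = dim_col (A ! 0); l = length A in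
     mat (m * l) (k * l) (\<lambda>(r, c). (A ! ((l + r div m - c div k) mod l)) $$ (r mod m, c mod k)))"

definition bcirc_tilde :: "tensor \<Rightarrow> real mat" where
  "bcirc_tilde B = (let m = dim_row (B ! 0); k = dim_col (B ! 0); l = length B in
     mat (m * l) (k * l) (\<lambda>(r, c). (B ! ((l + c div k - r div m) mod l)) $$ (r mod m, c mod k)))"

definition unfold_t :: "tensor \<Rightarrow> real mat" where
  "unfold_t X = (let m = dim_row (X ! 0); k = dim_col (X ! 0); l = length X in
     mat (m * l) k (\<lambda>(r, c). (X ! (r div m)) $$ (r mod m, c)))"

definition fold_t :: "nat \<Rightarrow> nat \<Rightarrow> real mat \<Rightarrow> tensor" where
  "fold_t m l M = map (\<lambda>t. mat m (dim_col M) (\<lambda>(i, j). M $$ (t * m + i, j))) [0..<l]"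

definition tprod :: "tensor \<Rightarrow> tensor \<Rightarrow> tensor" where
  "tprod A B = fold_t (dim_row (A ! 0)) (length A) (bcirc A * unfold_t B)"

definition tadd :: "tensor \<Rightarrow> tensor \<Rightarrow> tensor" where
  "tadd A B = map2 (+) A B"

text \<open>Column-major vectorization: columns of slice 1, then of slice 2, etc.\<close>
definition tvec :: "tensor \<Rightarrow> real vec" where
  "tvec T = (let m = dim_row (T ! 0); k = dim_col (T ! 0) in
     vec (length T * (m * k))
       (\<lambda>t. (T ! (t div (m * k))) $$ ((t mod (m * k)) mod m, (t mod (m * k)) div m)))"

definition kron :: "real mat \<Rightarrow> real mat \<Rightarrow> real mat" where
  "kron M N = mat (dim_row M * dim_row N) (dim_col M * dim_col N)
     (\<lambda>(r, c). M $$ (r div dim_row N, c div dim_col N) * N $$ (r mod dim_row N, c mod dim_col N))"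

definition block_of :: "nat \<Rightarrow> nat \<Rightarrow> real mat \<Rightarrow> nat \<Rightarrow> nat \<Rightarrow> real mat" where
  "block_of m k M i j = mat m k (\<lambda>(r, c). M $$ (i * m + r, j * k + c))"

definition khatri_rao :: "nat \<Rightarrow> nat \<Rightarrow> nat \<Rightarrow> nat \<Rightarrow> nat \<Rightarrow> real mat \<Rightarrow> real mat \<Rightarrow> real mat" where
  "khatri_rao l m1 k1 m2 k2 M N = mat (l * (m1 * m2)) (l * (k1 * k2))
     (\<lambda>(r, c). kron (block_of m1 k1 M (r div (m1 * m2)) (c div (k1 * k2)))
                    (block_of m2 k2 N (r div (m1 * m2)) (c div (k1 * k2)))
                $$ (r mod (m1 * m2), c mod (k1 * k2)))"

definition ones_block_id :: "nat \<Rightarrow> nat \<Rightarrow> real mat" where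
  "ones_block_id p l = mat (p * l) (p * l) (\<lambda>(r, c). if r mod p = c mod p then 1 else 0)"

definition mp_inverse :: "real mat \<Rightarrow> real mat" where
  "mp_inverse M = (THE X. X \<in> carrier_mat (dim_col M) (dim_row M) \<and>
     M * X * M = M \<and> X * M * X = X \<and>
     transpose_mat (M * X) = M * X \<and> transpose_mat (X * M) = X * M)"

end

theory Submission
  imports Defs "Jordan_Normal_Form.Determinant"
begin

text \<open>Under the column-major vectorization the linear map X \<mapsto> A*X + X*B is represented by the
  coefficient matrix L of the statement: slice s of A*X is the sum over t of A^(s-t) X^(t), which is
  the Khatri-Rao term, and slice s of X*B is the sum over t of X^(s-t) B^(t), which after the
  circular reindexing t \<mapsto> s-t is the Kronecker term. As the equation is solvable, vec C = L vec X0
  lies in the range of L, hence L G vec C = L G L vec X0 = vec C for every G with L G L = L, in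
  particular for the Moore-Penrose inverse; since vec is a bijection, the tensor whose
  vectorization is L^+ vec C solves the equation.

  The Moore-Penrose inverse is defined by a definite description, so it must be shown to exist
  and to be unique.
  For S = M^T M, a nonzero polynomial annihilates S (the k^2+1 matrices I, S, S^2, ... are linearly
  dependent); stripping its vanishing lowest coefficients gives S^r (a I + S q(S)) = 0 with a \<noteq> 0,
  and since S^2 Y = 0 forces S Y = 0 for symmetric S, we get S T S = S for T = -q(S)/a. Then
  T S T M^T satisfies the four Penrose equations.\<close>

lemma mult_add_less_mult:
  fixes q r a b :: nat
  assumes "q < a" and "r < b"
  shows "q * b + r < a * b"
proof -
  have "q * b + r < Suc q * b" using assms(2) by simp
  also have "\<dots> \<le> a * b" using assms(1) by (intro mult_right_mono) auto
  finally show ?thesis .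
qed

lemma sum_lessThan_mult:
  fixes f :: "nat \<Rightarrow> 'a :: comm_monoid_add"
  shows "(\<Sum>x<a * b. f x) = (\<Sum>q<a. \<Sum>r<b. f (q * b + r))"
proof -
  have "(\<Sum>r<b. f (q * b + r)) = sum f {q * b..<q * b + b}" for q
    using sum.shift_bounds_nat_ivl[of f 0 "q * b" b] by (simp add: atLeast0LessThan add.commute)
  thus ?thesis by (simp add: sum.nat_group)
qed

section \<open>Moore--Penrose inverse\<close>

lemma transpose_smult_mat: "transpose_mat (c \<cdot>\<^sub>m A) = c \<cdot>\<^sub>m transpose_mat A"
  by (intro eq_matI) auto

lemma mult_assoc_dims:
  fixes A B C :: "'a :: semiring_0 mat"
  assumes "dim_col A = dim_row B" and "dim_col B = dim_row C"
  shows "A * B * C = A * (B * C)"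
  using assms by (intro assoc_mult_mat) (auto intro: carrier_matI)

lemma transpose_mult_self_eq_zero:
  fixes N :: "'a :: linordered_field mat"
  assumes N: "N \<in> carrier_mat m k" and z: "transpose_mat N * N = 0\<^sub>m k k"
  shows "N = 0\<^sub>m m k"
proof (rule eq_matI)
  fix i j assume i: "i < dim_row (0\<^sub>m m k)" and j: "j < dim_col (0\<^sub>m m k)"
  have "(\<Sum>t<m. N $$ (t,j) * N $$ (t,j)) = (transpose_mat N * N) $$ (j,j)"
    using N j by (simp add: scalar_prod_def lessThan_atLeast0)
  also have "\<dots> = 0" using z j by simp
  finally have "\<forall>t\<in>{..<m}. N $$ (t,j) * N $$ (t,j) = 0"
    by (subst sum_nonneg_eq_0_iff[symmetric]) auto
  thus "N $$ (i,j) = 0\<^sub>m m k $$ (i,j)" using i j by auto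
qed (use N in auto)

lemma transpose_mult_mult_eq_zero:
  fixes M D :: "'a :: linordered_field mat"
  assumes M: "M \<in> carrier_mat m k" and D: "D \<in> carrier_mat k q"
    and z: "transpose_mat M * (M * D) = 0\<^sub>m k q"
  shows "M * D = 0\<^sub>m m q"
proof (rule transpose_mult_self_eq_zero)
  show "M * D \<in> carrier_mat m q" using M D by simp
  have "transpose_mat (M * D) * (M * D) = transpose_mat D * (transpose_mat M * (M * D))"
    using M D by (simp add: transpose_mult mult_assoc_dims)
  thus "transpose_mat (M * D) * (M * D) = 0\<^sub>m q q" using z D by simp
qed

lemma wide_mat_kernel_nontrivial:
  fixes M :: "'a :: field mat"
  assumes M: "M \<in> carrier_mat m k" and mk: "m < k"
  obtains v where "v \<in> carrier_vec k" "v \<noteq> 0\<^sub>v k" "M *\<^sub>v v = 0\<^sub>v m"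
proof -
  define W where "W = mat k k (\<lambda>(r, c). if r < m then M $$ (r, c) else 0)"
  have W: "W \<in> carrier_mat k k" unfolding W_def by simp
  have "W = mat\<^sub>r k k (\<lambda>r. if r = m then 0\<^sub>v k else row W r)"
    by (rule eq_matI) (auto simp: W_def)
  also have "det \<dots> = 0"
    by (rule det_row_0[OF mk]) (use W in auto)
  finally have "det W = 0" .
  then obtain v where v: "v \<in> carrier_vec k" "v \<noteq> 0\<^sub>v k" "W *\<^sub>v v = 0\<^sub>v k"
    using det_0_iff_vec_prod_zero_field[OF W] by blast
  have "M *\<^sub>v v = 0\<^sub>v m"
  proof (rule eq_vecI)
    fix r assume "r < dim_vec (0\<^sub>v m)"
    hence r: "r < m" by simp
    have "(M *\<^sub>v v) $ r = (W *\<^sub>v v) $ r"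
      using r mk M v(1) by (simp add: W_def scalar_prod_def)
    thus "(M *\<^sub>v v) $ r = 0\<^sub>v m $ r" using v(3) r mk by simp
  qed (use M in simp)
  with v that show ?thesis by blast
qed

primrec mat_horner :: "nat \<Rightarrow> 'a :: comm_ring_1 mat \<Rightarrow> 'a list \<Rightarrow> 'a mat" where
  "mat_horner k S [] = 0\<^sub>m k k"
| "mat_horner k S (c # cs) = c \<cdot>\<^sub>m 1\<^sub>m k + S * mat_horner k S cs"

lemma mat_horner_carrier [simp]:
  "S \<in> carrier_mat k k \<Longrightarrow> mat_horner k S cs \<in> carrier_mat k k"
  by (induction cs) auto

lemma dim_mat_horner [simp]:
  "S \<in> carrier_mat k k \<Longrightarrow> dim_row (mat_horner k S cs) = k"
  "S \<in> carrier_mat k k \<Longrightarrow> dim_col (mat_horner k S cs) = k"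
  using mat_horner_carrier by blast+

lemma mat_horner_commute:
  assumes S: "S \<in> carrier_mat k k"
  shows "S * mat_horner k S cs = mat_horner k S cs * S"
proof (induction cs)
  case (Cons c cs)
  have H: "mat_horner k S cs \<in> carrier_mat k k" using S by simp
  have "S * mat_horner k S (c # cs) = c \<cdot>\<^sub>m S + S * (S * mat_horner k S cs)"
    using S H by (simp add: mult_add_distrib_mat[OF S smult_carrier_mat[OF one_carrier_mat]]
        mult_smult_distrib[OF S one_carrier_mat])
  also have "\<dots> = c \<cdot>\<^sub>m S + S * mat_horner k S cs * S"
    using Cons.IH assoc_mult_mat[OF S H S] by metis
  also have "\<dots> = mat_horner k S (c # cs) * S"
    using S H by (simp add: add_mult_distrib_mat[OF smult_carrier_mat[OF one_carrier_mat] _ S]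
        mult_smult_assoc_mat[OF one_carrier_mat S])
  finally show ?case .
qed (use S in simp)

lemma transpose_mat_horner:
  assumes S: "S \<in> carrier_mat k k" and sym: "transpose_mat S = S"
  shows "transpose_mat (mat_horner k S cs) = mat_horner k S cs"
proof (induction cs)
  case (Cons c cs)
  have H: "mat_horner k S cs \<in> carrier_mat k k" using S by simp
  have "transpose_mat (mat_horner k S (c # cs)) = c \<cdot>\<^sub>m 1\<^sub>m k + mat_horner k S cs * S"
    using S H Cons.IH sym by (simp add: transpose_add[of _ k k] transpose_mult[OF S H] transpose_smult_mat)
  also have "\<dots> = mat_horner k S (c # cs)"
    using mat_horner_commute[OF S] by simp
  finally show ?case .
qed simp

lemma mat_horner_replicate_zero:
  assumes S: "S \<in> carrier_mat k k"
  shows "mat_horner k S (replicate r 0 @ cs) = ((*) S ^^ r) (mat_horner k S cs)"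
proof (induction r)
  case (Suc r)
  have "mat_horner k S (replicate r 0 @ cs) \<in> carrier_mat k k" using S by simp
  with Suc.IH S show ?case by (intro eq_matI) auto
qed simp

lemma mat_horner_index:
  assumes S: "S \<in> carrier_mat k k" and a: "a < k" and b: "b < k"
  shows "mat_horner k S cs $$ (a, b) = (\<Sum>i<length cs. cs ! i * ((*) S ^^ i) (1\<^sub>m k) $$ (a, b))"
  using a
proof (induction cs arbitrary: a)
  case (Cons c cs)
  let ?P = "\<lambda>i. ((*) S ^^ i) (1\<^sub>m k)"
  have P: "?P i \<in> carrier_mat k k" for i
    by (induction i) (use S in auto)
  hence P_dims: "dim_row (?P i) = k" "dim_col (?P i) = k" for i
    by auto
  have "mat_horner k S (c # cs) $$ (a, b)
      = c * ?P 0 $$ (a, b) + (\<Sum>j<k. S $$ (a, j) * mat_horner k S cs $$ (j, b))"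
    using S Cons.prems b by (simp add: scalar_prod_def lessThan_atLeast0)
  also have "\<dots> = c * ?P 0 $$ (a, b)
      + (\<Sum>i<length cs. cs ! i * (\<Sum>j<k. S $$ (a, j) * ?P i $$ (j, b)))"
    using Cons.IH by (simp add: sum_distrib_left mult_ac sum.swap[of _ "{..<k}"])
  also have "\<dots> = c * ?P 0 $$ (a, b) + (\<Sum>i<length cs. cs ! i * ?P (Suc i) $$ (a, b))"
    using S P_dims Cons.prems b by (simp add: scalar_prod_def lessThan_atLeast0)
  also have "\<dots> = (\<Sum>i<length (c # cs). (c # cs) ! i * ?P i $$ (a, b))"
    unfolding length_Cons sum.lessThan_Suc_shift by simp
  finally show ?case .
qed (use b in simp)

lemma mat_horner_annihilator_exists:
  fixes S :: "'a :: field mat"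
  assumes S: "S \<in> carrier_mat k k"
  obtains cs where "\<exists>c\<in>set cs. c \<noteq> 0" and "mat_horner k S cs = 0\<^sub>m k k"
proof -
  let ?P = "\<lambda>i. ((*) S ^^ i) (1\<^sub>m k)"
  define W where "W = mat (k * k) (Suc (k * k)) (\<lambda>(r, i). ?P i $$ (r div k, r mod k))"
  obtain v where v: "v \<in> carrier_vec (Suc (k * k))" "v \<noteq> 0\<^sub>v (Suc (k * k))" "W *\<^sub>v v = 0\<^sub>v (k * k)"
    by (rule wide_mat_kernel_nontrivial[of W "k * k" "Suc (k * k)"]) (auto simp: W_def)
  define cs where "cs = list_of_vec v"
  have cs: "length cs = Suc (k * k)" "\<And>i. i < Suc (k * k) \<Longrightarrow> cs ! i = v $ i"
    using v(1) by (auto simp: cs_def)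
  have "\<exists>c\<in>set cs. c \<noteq> 0"
  proof (rule ccontr)
    assume "\<not> (\<exists>c\<in>set cs. c \<noteq> 0)"
    hence "v $ i = 0" if "i < Suc (k * k)" for i
      using cs that by (metis nth_mem)
    hence "v = 0\<^sub>v (Suc (k * k))"
      using v(1) by (intro eq_vecI) auto
    with v(2) show False ..
  qed
  moreover have "mat_horner k S cs = 0\<^sub>m k k"
  proof (rule eq_matI)
    fix a b assume "a < dim_row (0\<^sub>m k k)" "b < dim_col (0\<^sub>m k k)"
    hence a: "a < k" and b: "b < k" by auto
    have ab: "a * k + b < k * k"
      using mult_add_less_mult[OF a b] .
    have "mat_horner k S cs $$ (a, b) = (\<Sum>i<Suc (k * k). v $ i * ?P i $$ (a, b))"
      using mat_horner_index[OF S a b] cs by simp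
    also have "\<dots> = (W *\<^sub>v v) $ (a * k + b)"
      using ab a b v(1) by (simp add: W_def scalar_prod_def lessThan_atLeast0 mult.commute)
    also have "\<dots> = 0" using v(3) ab by simp
    finally show "mat_horner k S cs $$ (a, b) = 0\<^sub>m k k $$ (a, b)" using a b by simp
  qed (use S in auto)
  ultimately show ?thesis using that by blast
qed

lemma split_first_nonzero:
  assumes "\<exists>c\<in>set cs. c \<noteq> 0"
  obtains r a rest where "cs = replicate r 0 @ a # rest" and "a \<noteq> 0"
  using assms
proof (induction cs arbitrary: thesis)
  case (Cons c cs)
  show ?case
  proof (cases "c = 0")
    case True
    with Cons.prems(2) obtain r a rest where "cs = replicate r 0 @ a # rest" "a \<noteq> 0"
      using Cons.IH by auto
    with True show ?thesis using Cons.prems(1)[of "Suc r"] by simp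
  qed (use Cons.prems(1)[of 0] in simp)
qed simp

lemma symmetric_funpow_mult_eq_zero:
  fixes S :: "'a :: linordered_field mat"
  assumes S: "S \<in> carrier_mat k k" and sym: "transpose_mat S = S"
    and Y: "Y \<in> carrier_mat k q" and z: "((*) S ^^ r) Y = 0\<^sub>m k q"
  shows "S * Y = 0\<^sub>m k q"
  using Y z
proof (induction r arbitrary: Y)
  case (Suc r)
  have "S * (S * Y) = 0\<^sub>m k q"
    using Suc.IH[of "S * Y"] Suc.prems S by (simp add: funpow_Suc_right del: funpow.simps)
  thus ?case
    using transpose_mult_mult_eq_zero[OF S Suc.prems(1)] sym by simp
qed (use S in simp)

lemma symmetric_annihilator_exists:
  fixes S :: "'a :: linordered_field mat"
  assumes S: "S \<in> carrier_mat k k" and sym: "transpose_mat S = S"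
  obtains a rest where "a \<noteq> 0" and "S * mat_horner k S (a # rest) = 0\<^sub>m k k"
proof -
  obtain cs where nz: "\<exists>c\<in>set cs. c \<noteq> 0" and annih: "mat_horner k S cs = 0\<^sub>m k k"
    using mat_horner_annihilator_exists[OF S] .
  obtain r a rest where cs: "cs = replicate r 0 @ a # rest" and a: "a \<noteq> 0"
    using split_first_nonzero[OF nz] .
  have "((*) S ^^ r) (mat_horner k S (a # rest)) = 0\<^sub>m k k"
    using annih mat_horner_replicate_zero[OF S] by (simp add: cs)
  hence "S * mat_horner k S (a # rest) = 0\<^sub>m k k"
    using symmetric_funpow_mult_eq_zero[OF S sym] S by simp
  with a that show ?thesis by blast
qed

lemma symmetric_inner_inverse_exists:
  fixes S :: "'a :: linordered_field mat"
  assumes S: "S \<in> carrier_mat k k" and sym: "transpose_mat S = S"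
  obtains T where "T \<in> carrier_mat k k" "transpose_mat T = T" "T * S = S * T" "S * T * S = S"
proof -
  obtain a rest where a: "a \<noteq> 0" and annih: "S * mat_horner k S (a # rest) = 0\<^sub>m k k"
    using symmetric_annihilator_exists[OF S sym] .
  define H where "H = mat_horner k S rest"
  have H: "H \<in> carrier_mat k k" using S by (simp add: H_def)
  have z: "a \<cdot>\<^sub>m S + S * (S * H) = 0\<^sub>m k k"
    using annih S H by (simp add: H_def[symmetric] mult_smult_distrib[OF S one_carrier_mat]
        mult_add_distrib_mat[OF S smult_carrier_mat[OF one_carrier_mat] mult_carrier_mat[OF S H]])
  have SSH: "S * (S * H) = - a \<cdot>\<^sub>m S"
  proof (rule eq_matI)
    fix i j assume ij: "i < dim_row (- a \<cdot>\<^sub>m S)" "j < dim_col (- a \<cdot>\<^sub>m S)"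
    hence "(a \<cdot>\<^sub>m S + S * (S * H)) $$ (i, j) = 0"
      using z S by simp
    thus "(S * (S * H)) $$ (i, j) = (- a \<cdot>\<^sub>m S) $$ (i, j)"
      using ij S H by simp
  qed (use S H in auto)
  define T where "T = (- 1 / a) \<cdot>\<^sub>m H"
  have T: "T \<in> carrier_mat k k" using H by (simp add: T_def)
  have "transpose_mat T = T"
    using transpose_mat_horner[OF S sym] by (simp add: T_def H_def transpose_smult_mat)
  moreover have TS: "T * S = S * T"
    using mat_horner_commute[OF S, of rest]
    by (simp add: T_def H_def[symmetric] mult_smult_assoc_mat[OF H S] mult_smult_distrib[OF S H])
  moreover have "S * T * S = S"
  proof -
    have "S * T * S = S * (S * T)"
      using assoc_mult_mat[OF S T S] TS by simp
    also have "\<dots> = (- 1 / a) \<cdot>\<^sub>m (S * (S * H))"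
      using S H by (simp add: T_def mult_smult_distrib[OF S H] mult_smult_distrib[OF S mult_carrier_mat[OF S H]])
    also have "\<dots> = S" using SSH a S by (intro eq_matI) auto
    finally show ?thesis .
  qed
  ultimately show ?thesis using that T by blast
qed

lemma mult_gram_inner_inverse:
  fixes M T :: "'a :: linordered_field mat"
  assumes M: "M \<in> carrier_mat m k" and T: "T \<in> carrier_mat k k"
    and STS: "transpose_mat M * M * T * (transpose_mat M * M) = transpose_mat M * M"
  shows "M * (T * (transpose_mat M * M)) = M"
proof -
  define S where "S = transpose_mat M * M"
  have S: "S \<in> carrier_mat k k" using M by (simp add: S_def)
  have D: "T * S - 1\<^sub>m k \<in> carrier_mat k k" using S T by (intro minus_carrier_mat) auto
  have "transpose_mat M * (M * (T * S - 1\<^sub>m k)) = S * (T * S - 1\<^sub>m k)"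
    using M D by (simp add: S_def mult_assoc_dims)
  also have "\<dots> = S * T * S - S"
    using S T by (simp add: mult_minus_distrib_mat[OF S mult_carrier_mat[OF T S] one_carrier_mat]
        mult_assoc_dims)
  also have "\<dots> = 0\<^sub>m k k" using STS S by (simp add: S_def)
  finally have MD: "M * (T * S - 1\<^sub>m k) = 0\<^sub>m m k"
    by (rule transpose_mult_mult_eq_zero[OF M D])
  show ?thesis
    unfolding S_def[symmetric]
  proof (rule eq_matI)
    fix i j assume ij: "i < dim_row M" "j < dim_col M"
    have "(M * (T * S - 1\<^sub>m k)) $$ (i, j) = 0" using MD ij M by simp
    thus "(M * (T * S)) $$ (i, j) = M $$ (i, j)"
      using ij M by (simp add: mult_minus_distrib_mat[OF M mult_carrier_mat[OF T S] one_carrier_mat])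
  qed (use M S T in auto)
qed

lemma penrose_equations_solvable:
  fixes M :: "'a :: linordered_field mat"
  assumes M: "M \<in> carrier_mat m k"
  obtains X where "X \<in> carrier_mat k m" "M * X * M = M" "X * M * X = X"
    "transpose_mat (M * X) = M * X" "transpose_mat (X * M) = X * M"
proof -
  define S where "S = transpose_mat M * M"
  have Mt: "transpose_mat M \<in> carrier_mat k m" using M by simp
  have S: "S \<in> carrier_mat k k" using M by (simp add: S_def)
  have sym: "transpose_mat S = S" using transpose_mult[OF Mt M] by (simp add: S_def)
  obtain T where T: "T \<in> carrier_mat k k" and T_sym: "transpose_mat T = T"
    and TS: "T * S = S * T" and STS: "S * T * S = S"
    using symmetric_inner_inverse_exists[OF S sym] .
  note dims = carrier_matD[OF M] carrier_matD[OF S] carrier_matD[OF T]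
  have MTS: "M * (T * S) = M"
    using mult_gram_inner_inverse[OF M T] STS by (simp add: S_def)
  have STSZ: "S * (T * (S * Z)) = S * Z" if "dim_row Z = k" for Z
    using STS that dims by (metis mult_assoc_dims index_mult_mat(2,3))
  define G where "G = T * (S * T)"
  have G: "G \<in> carrier_mat k k" using S T by (simp add: G_def)
  have G_sym: "transpose_mat G = G"
    using sym T_sym dims by (simp add: G_def transpose_mult[OF T mult_carrier_mat[OF S T]]
        transpose_mult[OF S T] mult_assoc_dims)
  define X where "X = G * transpose_mat M"
  have X: "X \<in> carrier_mat k m" using G Mt by (simp add: X_def)
  have XM: "X * M = T * S"
    using STS dims by (simp add: X_def G_def S_def mult_assoc_dims)
  have "M * X * M = M" using MTS XM X M by (simp add: mult_assoc_dims)
  moreover have "X * M * X = X"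
    using XM STSZ dims by (simp add: X_def G_def mult_assoc_dims)
  moreover have "transpose_mat (M * X) = M * X"
    using G_sym assoc_mult_mat[OF M G Mt]
    by (simp add: X_def transpose_mult[OF M mult_carrier_mat[OF G Mt]] transpose_mult[OF G Mt])
  moreover have "transpose_mat (X * M) = X * M"
    using S T sym T_sym TS by (simp add: XM transpose_mult)
  ultimately show ?thesis using that X by blast
qed

lemma penrose_equations_unique:
  fixes M X Y :: "'a :: comm_ring_1 mat"
  assumes M: "M \<in> carrier_mat m k" and X: "X \<in> carrier_mat k m" and Y: "Y \<in> carrier_mat k m"
    and X1: "M * X * M = M" and X2: "X * M * X = X"
    and X3: "transpose_mat (M * X) = M * X" and X4: "transpose_mat (X * M) = X * M"
    and Y1: "M * Y * M = M" and Y2: "Y * M * Y = Y"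
    and Y3: "transpose_mat (M * Y) = M * Y" and Y4: "transpose_mat (Y * M) = Y * M"
  shows "X = Y"
proof -
  note dims = carrier_matD[OF M] carrier_matD[OF X] carrier_matD[OF Y]
  have MX: "transpose_mat X * transpose_mat M = M * X"
    using X3 transpose_mult[OF M X] by simp
  have YM: "transpose_mat M * transpose_mat Y = Y * M"
    using Y4 transpose_mult[OF Y M] by simp
  have "transpose_mat M = transpose_mat M * transpose_mat (M * Y)"
    using transpose_mult[OF mult_carrier_mat[OF M Y] M] Y1 by simp
  hence Mt_MY: "transpose_mat M * (M * Y) = transpose_mat M"
    using Y3 by simp
  have "transpose_mat M = transpose_mat (X * M) * transpose_mat M"
    using transpose_mult[OF M mult_carrier_mat[OF X M]] X1 assoc_mult_mat[OF M X M] by simp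
  hence XM_Mt: "X * M * transpose_mat M = transpose_mat M"
    using X4 by simp
  have "X = X * (transpose_mat X * transpose_mat M)"
    using X2 dims by (simp add: MX mult_assoc_dims)
  also have "\<dots> = X * (transpose_mat X * (transpose_mat M * (M * Y)))"
    by (simp only: Mt_MY)
  also have "\<dots> = X * M * X * M * Y"
    using dims by (simp add: MX flip: mult_assoc_dims)
  also have "\<dots> = X * M * Y" by (simp only: X2)
  finally have X_eq: "X = X * M * Y" .
  have "Y = transpose_mat M * transpose_mat Y * Y"
    using Y2 by (simp add: YM)
  also have "\<dots> = X * M * transpose_mat M * transpose_mat Y * Y"
    by (simp only: XM_Mt)
  also have "\<dots> = X * M * (Y * M * Y)"
    using dims by (simp add: YM mult_assoc_dims)
  also have "\<dots> = X * M * Y" by (simp only: Y2)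
  finally show ?thesis using X_eq by simp
qed

lemma mp_inverse_penrose:
  fixes M :: "real mat"
  assumes M: "M \<in> carrier_mat m k"
  shows "mp_inverse M \<in> carrier_mat k m" and "M * mp_inverse M * M = M"
proof -
  let ?P = "\<lambda>X. X \<in> carrier_mat (dim_col M) (dim_row M) \<and> M * X * M = M \<and> X * M * X = X
    \<and> transpose_mat (M * X) = M * X \<and> transpose_mat (X * M) = X * M"
  obtain X where PX: "?P X"
    using penrose_equations_solvable[OF M] M by (metis carrier_matD)
  moreover have "Y = X" if "?P Y" for Y
    using penrose_equations_unique[OF M, of Y X] that PX M by auto
  ultimately have "?P (mp_inverse M)"
    unfolding mp_inverse_def by (rule theI)
  thus "mp_inverse M \<in> carrier_mat k m" "M * mp_inverse M * M = M"
    using M by auto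
qed

lemma inner_inverse_solves_consistent:
  fixes M G :: "'a :: comm_ring_1 mat"
  assumes M: "M \<in> carrier_mat m k" and G: "G \<in> carrier_mat k m" and MGM: "M * G * M = M"
    and x: "x \<in> carrier_vec k"
  shows "M *\<^sub>v (G *\<^sub>v (M *\<^sub>v x)) = M *\<^sub>v x"
proof -
  have "M *\<^sub>v (G *\<^sub>v (M *\<^sub>v x)) = (M * G) *\<^sub>v (M *\<^sub>v x)"
    by (rule assoc_mult_mat_vec[OF M G mult_mat_vec_carrier[OF M x], symmetric])
  also have "\<dots> = (M * G * M) *\<^sub>v x"
    by (rule assoc_mult_mat_vec[OF mult_carrier_mat[OF M G] M x, symmetric])
  finally show ?thesis using MGM by simp
qed

section \<open>Vectorization and the t-product\<close>

lemma tensor_index_less: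
  fixes s j i l p n :: nat
  assumes "s < l" "j < p" "i < n"
  shows "s * (n * p) + j * n + i < l * (n * p)"
  using mult_add_less_mult[OF assms(1) mult_add_less_mult[OF assms(2,3)]]
  by (simp add: ac_simps)

lemma tensor_index_div_mod:
  fixes s j i p n :: nat
  assumes "j < p" "i < n"
  shows "(s * (n * p) + j * n + i) div n = s * p + j"
    and "(s * (n * p) + j * n + i) mod n = i"
    and "(s * (n * p) + j * n + i) div (n * p) = s"
    and "(s * (n * p) + j * n + i) mod (n * p) = j * n + i"
proof -
  have "s * (n * p) + j * n + i = (s * p + j) * n + i" by (simp add: algebra_simps)
  thus "(s * (n * p) + j * n + i) div n = s * p + j" "(s * (n * p) + j * n + i) mod n = i"
    using assms(2) by simp_all
  have lt: "j * n + i < n * p" using mult_add_less_mult[OF assms] by (simp add: mult.commute)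
  hence np: "n * p \<noteq> 0" by linarith
  show "(s * (n * p) + j * n + i) div (n * p) = s"
    using div_mult_self3[OF np, of s "j * n + i"] lt by (simp add: add.assoc)
  show "(s * (n * p) + j * n + i) mod (n * p) = j * n + i"
    using mod_mult_self3[of s "n * p" "j * n + i"] lt by (simp add: add.assoc)
qed

lemma tensor_index_cases:
  fixes R l n p :: nat
  assumes R: "R < l * (n * p)"
  obtains s j i where "s < l" "j < p" "i < n" "R = s * (n * p) + j * n + i"
proof
  have np: "0 < n * p" using R by (cases "n * p = 0") auto
  show "R div (n * p) < l" using R by (simp add: less_mult_imp_div_less)
  show "R mod (n * p) div n < p"
    using np by (simp add: less_mult_imp_div_less mult.commute)
  show "R mod (n * p) mod n < n" using np by simp
  show "R = R div (n * p) * (n * p) + R mod (n * p) div n * n + R mod (n * p) mod n"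
    by (metis div_mult_mod_eq add.assoc)
qed

lemma sum_tensor_index:
  fixes f :: "nat \<Rightarrow> 'a :: comm_monoid_add"
  shows "(\<Sum>C<l * (n * p). f C) = (\<Sum>t<l. \<Sum>v<p. \<Sum>u<n. f (t * (n * p) + v * n + u))"
  by (simp add: sum_lessThan_mult mult.commute[of n p] add.assoc)

lemma dim_tvec: "is_tensor n p l X \<Longrightarrow> dim_vec (tvec X) = l * (n * p)"
  by (cases "l = 0") (auto simp: tvec_def is_tensor_def Let_def)

lemma tvec_index:
  assumes X: "is_tensor n p l X" and "s < l" "j < p" "i < n"
  shows "tvec X $ (s * (n * p) + j * n + i) = X ! s $$ (i, j)"
proof -
  have "length X = l" "X ! 0 \<in> carrier_mat n p" using X \<open>s < l\<close> by (auto simp: is_tensor_def)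
  thus ?thesis
    using assms(3,4) tensor_index_less[OF assms(2-4)] tensor_index_div_mod[OF assms(3,4)]
    by (simp add: tvec_def Let_def)
qed

lemma tvec_eqI:
  assumes Y: "is_tensor n p l Y" and w: "dim_vec w = l * (n * p)"
    and index: "\<And>s j i. s < l \<Longrightarrow> j < p \<Longrightarrow> i < n \<Longrightarrow> w $ (s * (n * p) + j * n + i) = Y ! s $$ (i, j)"
  shows "w = tvec Y"
proof (rule eq_vecI)
  show "dim_vec w = dim_vec (tvec Y)" using w dim_tvec[OF Y] by simp
  fix R assume "R < dim_vec (tvec Y)"
  with dim_tvec[OF Y] obtain s j i where "s < l" "j < p" "i < n" and R: "R = s * (n * p) + j * n + i"
    by (auto elim: tensor_index_cases)
  thus "w $ R = tvec Y $ R" using index tvec_index[OF Y] by simp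
qed

lemma tvec_inject:
  assumes X: "is_tensor n p l X" and Y: "is_tensor n p l Y" and eq: "tvec X = tvec Y"
  shows "X = Y"
proof (rule nth_equalityI)
  show "length X = length Y" using X Y by (simp add: is_tensor_def)
  fix s assume "s < length X"
  hence s: "s < l" using X by (simp add: is_tensor_def)
  have "X ! s \<in> carrier_mat n p" "Y ! s \<in> carrier_mat n p"
    using X Y s by (auto simp: is_tensor_def)
  thus "X ! s = Y ! s"
    using tvec_index[OF X s] tvec_index[OF Y s] eq by (intro eq_matI) auto
qed

lemma tvec_surjective:
  assumes v: "v \<in> carrier_vec (l * (n * p))"
  obtains Y where "is_tensor n p l Y" "tvec Y = v"
proof
  define Y where "Y = map (\<lambda>s. mat n p (\<lambda>(i, j). v $ (s * (n * p) + j * n + i))) [0..<l]"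
  show Y: "is_tensor n p l Y" by (simp add: Y_def is_tensor_def)
  have "v = tvec Y"
    by (rule tvec_eqI[OF Y]) (use v in \<open>simp_all add: Y_def\<close>)
  thus "tvec Y = v" ..
qed

lemma mult_tvec_index:
  assumes M: "M \<in> carrier_mat (l * (n * p)) (l * (n * p))" and X: "is_tensor n p l X"
    and R: "R < l * (n * p)"
  shows "(M *\<^sub>v tvec X) $ R = (\<Sum>t<l. \<Sum>v<p. \<Sum>u<n. M $$ (R, t * (n * p) + v * n + u) * X ! t $$ (u, v))"
proof -
  have "(M *\<^sub>v tvec X) $ R = (\<Sum>C<l * (n * p). M $$ (R, C) * tvec X $ C)"
    using M R dim_tvec[OF X] by (simp add: scalar_prod_def lessThan_atLeast0)
  also have "\<dots> = (\<Sum>t<l. \<Sum>v<p. \<Sum>u<n. M $$ (R, t * (n * p) + v * n + u) * X ! t $$ (u, v))"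
    by (simp add: sum_tensor_index tvec_index[OF X])
  finally show ?thesis .
qed

lemma tensor_slice_carrier:
  "is_tensor m k l T \<Longrightarrow> s < l \<Longrightarrow> T ! s \<in> carrier_mat m k"
  by (simp add: is_tensor_def)

lemma is_tensor_tprod:
  assumes A: "is_tensor m k l A" and X: "is_tensor k q l X"
  shows "is_tensor m q l (tprod A X)"
proof (cases "l = 0")
  case False
  hence "A ! 0 \<in> carrier_mat m k" "X ! 0 \<in> carrier_mat k q"
    using tensor_slice_carrier[OF A] tensor_slice_carrier[OF X] by simp_all
  thus ?thesis
    using A by (auto simp: is_tensor_def tprod_def fold_t_def unfold_t_def Let_def)
qed (use A in \<open>simp add: is_tensor_def tprod_def fold_t_def\<close>)

lemma tprod_index:
  assumes A: "is_tensor m k l A" and X: "is_tensor k q l X"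
    and s: "s < l" and i: "i < m" and j: "j < q"
  shows "tprod A X ! s $$ (i, j) = (\<Sum>t<l. \<Sum>u<k. A ! ((l + s - t) mod l) $$ (i, u) * X ! t $$ (u, j))"
proof -
  have l: "0 < l" using s by simp
  have A0: "A ! 0 \<in> carrier_mat m k" and X0: "X ! 0 \<in> carrier_mat k q"
    using tensor_slice_carrier[OF A l] tensor_slice_carrier[OF X l] .
  have lengths: "length A = l" "length X = l" using A X by (simp_all add: is_tensor_def)
  have row: "s * m + i < m * l" using mult_add_less_mult[OF s i] by (simp add: mult.commute)
  have "tprod A X ! s $$ (i, j) = (bcirc A * unfold_t X) $$ (s * m + i, j)"
    using s i j A0 X0 lengths by (simp add: tprod_def fold_t_def unfold_t_def Let_def)
  also have "\<dots> = (\<Sum>c<l * k. bcirc A $$ (s * m + i, c) * unfold_t X $$ (c, j))"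
    using row j A0 X0 lengths
    by (simp add: bcirc_def unfold_t_def Let_def scalar_prod_def lessThan_atLeast0 mult.commute)
  also have "\<dots> = (\<Sum>t<l. \<Sum>u<k. bcirc A $$ (s * m + i, t * k + u) * unfold_t X $$ (t * k + u, j))"
    by (rule sum_lessThan_mult)
  also have "\<dots> = (\<Sum>t<l. \<Sum>u<k. A ! ((l + s - t) mod l) $$ (i, u) * X ! t $$ (u, j))"
  proof (intro sum.cong refl)
    fix t u assume "t \<in> {..<l}" "u \<in> {..<k}"
    hence "t * k + u < k * l" using mult_add_less_mult[of t l u k] by (simp add: mult.commute)
    thus "bcirc A $$ (s * m + i, t * k + u) * unfold_t X $$ (t * k + u, j)
        = A ! ((l + s - t) mod l) $$ (i, u) * X ! t $$ (u, j)"
      using row i j \<open>u \<in> {..<k}\<close> A0 X0 lengths by (simp add: bcirc_def unfold_t_def Let_def)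
  qed
  finally show ?thesis .
qed

lemma is_tensor_tadd:
  "is_tensor m k l X \<Longrightarrow> is_tensor m k l Y \<Longrightarrow> is_tensor m k l (tadd X Y)"
  by (simp add: is_tensor_def tadd_def)

lemma tvec_tadd:
  assumes X: "is_tensor n p l X" and Y: "is_tensor n p l Y"
  shows "tvec (tadd X Y) = tvec X + tvec Y"
proof (rule eq_vecI)
  have XY: "is_tensor n p l (tadd X Y)" by (rule is_tensor_tadd[OF X Y])
  show "dim_vec (tvec (tadd X Y)) = dim_vec (tvec X + tvec Y)"
    using dim_tvec[OF XY] dim_tvec[OF Y] by simp
  fix R assume "R < dim_vec (tvec X + tvec Y)"
  with dim_tvec[OF Y] obtain s j i where sji: "s < l" "j < p" "i < n"
    and R: "R = s * (n * p) + j * n + i"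
    by (auto elim: tensor_index_cases)
  have "tadd X Y ! s = X ! s + Y ! s" using X Y sji by (simp add: is_tensor_def tadd_def)
  thus "tvec (tadd X Y) $ R = (tvec X + tvec Y) $ R"
    using tvec_index[OF XY sji] tvec_index[OF X sji] tvec_index[OF Y sji]
      tensor_slice_carrier[OF X sji(1)] tensor_slice_carrier[OF Y sji(1)]
      dim_tvec[OF Y] tensor_index_less[OF sji] sji
    by (simp add: R)
qed

section \<open>The coefficient matrix of the t-Sylvester equation\<close>

lemma circulant_index_involution:
  fixes s t l :: nat
  assumes "s < l" "t < l"
  shows "(l + s - (l + s - t) mod l) mod l = t"
  using assms by (cases "t \<le> s") (auto simp: mod_if)

lemma sum_circulant_reindex:
  fixes s l :: nat
  assumes s: "s < l"
  shows "(\<Sum>t<l. g ((l + s - t) mod l) t) = (\<Sum>t<l. g t ((l + s - t) mod l))"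
  by (rule sum.reindex_bij_witness[where i = "\<lambda>t. (l + s - t) mod l" and j = "\<lambda>t. (l + s - t) mod l"])
    (use s circulant_index_involution[OF s] in auto)

lemma bcirc_tilde_carrier:
  assumes "is_tensor p p l B" shows "bcirc_tilde B \<in> carrier_mat (p * l) (p * l)"
  using assms by (cases "l = 0") (auto simp: bcirc_tilde_def is_tensor_def Let_def)

lemma kron_bcirc_tilde_carrier:
  "is_tensor p p l B \<Longrightarrow> kron (transpose_mat (bcirc_tilde B)) (1\<^sub>m n) \<in> carrier_mat (l * (n * p)) (l * (n * p))"
  using bcirc_tilde_carrier[of p l B] by (simp add: kron_def ac_simps)

lemma kron_bcirc_tilde_index:
  assumes B: "is_tensor p p l B" and st: "s < l" "t < l" and jv: "j < p" "v < p" and iu: "i < n" "u < n"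
  shows "kron (transpose_mat (bcirc_tilde B)) (1\<^sub>m n) $$ (s * (n * p) + j * n + i, t * (n * p) + v * n + u)
    = B ! ((l + s - t) mod l) $$ (v, j) * (if i = u then 1 else 0)"
proof -
  have B0: "B ! 0 \<in> carrier_mat p p" and len: "length B = l"
    using B st by (auto simp: is_tensor_def)
  have "s * (n * p) + j * n + i < p * l * n" "t * (n * p) + v * n + u < p * l * n"
    using tensor_index_less[OF st(1) jv(1) iu(1)] tensor_index_less[OF st(2) jv(2) iu(2)]
    by (simp_all add: ac_simps)
  moreover have blk: "s * p + j < p * l" "t * p + v < p * l"
    using mult_add_less_mult[OF st(1) jv(1)] mult_add_less_mult[OF st(2) jv(2)] by (simp_all add: mult.commute)
  ultimately have "kron (transpose_mat (bcirc_tilde B)) (1\<^sub>m n) $$ (s * (n * p) + j * n + i, t * (n * p) + v * n + u)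
      = bcirc_tilde B $$ (t * p + v, s * p + j) * (if i = u then 1 else 0)"
    using B0 len iu
      tensor_index_div_mod[OF jv(1) iu(1)] tensor_index_div_mod[OF jv(2) iu(2)]
    by (simp add: kron_def bcirc_tilde_def Let_def)
  also have "\<dots> = B ! ((l + s - t) mod l) $$ (v, j) * (if i = u then 1 else 0)"
    using B0 len blk jv by (simp add: bcirc_tilde_def Let_def)
  finally show ?thesis .
qed

lemma kron_bcirc_tilde_mult_tvec:
  assumes B: "is_tensor p p l B" and X: "is_tensor n p l X"
  shows "kron (transpose_mat (bcirc_tilde B)) (1\<^sub>m n) *\<^sub>v tvec X = tvec (tprod X B)"
proof (rule tvec_eqI)
  let ?K = "kron (transpose_mat (bcirc_tilde B)) (1\<^sub>m n)"
  have K: "?K \<in> carrier_mat (l * (n * p)) (l * (n * p))"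
    by (rule kron_bcirc_tilde_carrier[OF B])
  thus "dim_vec (?K *\<^sub>v tvec X) = l * (n * p)" by simp
  show "is_tensor n p l (tprod X B)" by (rule is_tensor_tprod[OF X B])
  fix s j i assume sji: "s < l" "j < p" "i < n"
  have "(?K *\<^sub>v tvec X) $ (s * (n * p) + j * n + i)
      = (\<Sum>t<l. \<Sum>v<p. \<Sum>u<n. B ! ((l + s - t) mod l) $$ (v, j) * (if i = u then 1 else 0) * X ! t $$ (u, v))"
    using sji by (simp add: mult_tvec_index[OF K X] tensor_index_less kron_bcirc_tilde_index[OF B])
  also have "\<dots> = (\<Sum>t<l. \<Sum>v<p. B ! ((l + s - t) mod l) $$ (v, j) * X ! t $$ (i, v))"
    using sji by (simp add: if_distrib[of "\<lambda>x. _ * x"] if_distrib[of "\<lambda>x. x * _"] cong: if_cong)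
  also have "\<dots> = (\<Sum>t<l. \<Sum>v<p. X ! ((l + s - t) mod l) $$ (i, v) * B ! t $$ (v, j))"
    using sum_circulant_reindex[OF sji(1), of "\<lambda>a b. \<Sum>v<p. B ! a $$ (v, j) * X ! b $$ (i, v)"]
    by (simp add: mult.commute)
  also have "\<dots> = tprod X B ! s $$ (i, j)"
    using tprod_index[OF X B sji(1,3,2)] by simp
  finally show "(?K *\<^sub>v tvec X) $ (s * (n * p) + j * n + i) = tprod X B ! s $$ (i, j)" .
qed

lemma khatri_rao_bcirc_carrier:
  "khatri_rao l p p n n (ones_block_id p l) (bcirc A) \<in> carrier_mat (l * (n * p)) (l * (n * p))"
  by (simp add: khatri_rao_def ac_simps)

lemma khatri_rao_bcirc_index:
  assumes A: "is_tensor n n l A" and st: "s < l" "t < l" and jv: "j < p" "v < p" and iu: "i < n" "u < n"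
  shows "khatri_rao l p p n n (ones_block_id p l) (bcirc A) $$ (s * (n * p) + j * n + i, t * (n * p) + v * n + u)
    = (if j = v then 1 else 0) * A ! ((l + s - t) mod l) $$ (i, u)"
proof -
  have "A ! 0 \<in> carrier_mat n n" "length A = l"
    using A st by (auto simp: is_tensor_def)
  moreover have "s * p + j < p * l" "t * p + v < p * l" "s * n + i < n * l" "t * n + u < n * l"
    "j * n + i < p * n" "v * n + u < p * n"
    using mult_add_less_mult[OF st(1) jv(1)] mult_add_less_mult[OF st(2) jv(2)]
      mult_add_less_mult[OF st(1) iu(1)] mult_add_less_mult[OF st(2) iu(2)]
      mult_add_less_mult[OF jv(1) iu(1)] mult_add_less_mult[OF jv(2) iu(2)]
    by (simp_all add: mult.commute)
  ultimately show ?thesis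
    using tensor_index_less[OF st(1) jv(1) iu(1)] tensor_index_less[OF st(2) jv(2) iu(2)]
      tensor_index_div_mod[OF jv(1) iu(1)] tensor_index_div_mod[OF jv(2) iu(2)] jv iu
    by (simp add: khatri_rao_def kron_def block_of_def ones_block_id_def bcirc_def Let_def
        mult.commute[of p n])
qed

lemma khatri_rao_bcirc_mult_tvec:
  assumes A: "is_tensor n n l A" and X: "is_tensor n p l X"
  shows "khatri_rao l p p n n (ones_block_id p l) (bcirc A) *\<^sub>v tvec X = tvec (tprod A X)"
proof (rule tvec_eqI)
  let ?K = "khatri_rao l p p n n (ones_block_id p l) (bcirc A)"
  have K: "?K \<in> carrier_mat (l * (n * p)) (l * (n * p))"
    by (rule khatri_rao_bcirc_carrier)
  thus "dim_vec (?K *\<^sub>v tvec X) = l * (n * p)" by simp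
  show "is_tensor n p l (tprod A X)" by (rule is_tensor_tprod[OF A X])
  fix s j i assume sji: "s < l" "j < p" "i < n"
  have "(?K *\<^sub>v tvec X) $ (s * (n * p) + j * n + i)
      = (\<Sum>t<l. \<Sum>v<p. \<Sum>u<n. (if j = v then 1 else 0) * A ! ((l + s - t) mod l) $$ (i, u) * X ! t $$ (u, v))"
    using sji by (simp add: mult_tvec_index[OF K X] tensor_index_less khatri_rao_bcirc_index[OF A])
  also have "\<dots> = (\<Sum>t<l. \<Sum>u<n. \<Sum>v<p. (if j = v then 1 else 0) * A ! ((l + s - t) mod l) $$ (i, u) * X ! t $$ (u, v))"
    by (rule sum.cong[OF refl], rule sum.swap)
  also have "\<dots> = (\<Sum>t<l. \<Sum>u<n. A ! ((l + s - t) mod l) $$ (i, u) * X ! t $$ (u, j))"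
    using sji by (simp add: if_distrib[of "\<lambda>x. x * _"] cong: if_cong)
  also have "\<dots> = tprod A X ! s $$ (i, j)"
    using tprod_index[OF A X sji(1,3,2)] by simp
  finally show "(?K *\<^sub>v tvec X) $ (s * (n * p) + j * n + i) = tprod A X ! s $$ (i, j)" .
qed

definition t_sylvester_mat :: "nat \<Rightarrow> nat \<Rightarrow> nat \<Rightarrow> tensor \<Rightarrow> tensor \<Rightarrow> real mat" where
  "t_sylvester_mat n p l A B = kron (transpose_mat (bcirc_tilde B)) (1\<^sub>m n)
     + khatri_rao l p p n n (ones_block_id p l) (bcirc A)"

lemma t_sylvester_mat_carrier:
  "t_sylvester_mat n p l A B \<in> carrier_mat (l * (n * p)) (l * (n * p))"
  unfolding t_sylvester_mat_def by (rule add_carrier_mat[OF khatri_rao_bcirc_carrier])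

lemma t_sylvester_mat_mult_tvec:
  assumes A: "is_tensor n n l A" and B: "is_tensor p p l B" and X: "is_tensor n p l X"
  shows "t_sylvester_mat n p l A B *\<^sub>v tvec X = tvec (tadd (tprod A X) (tprod X B))"
proof -
  have X_vec: "tvec X \<in> carrier_vec (l * (n * p))"
    using dim_tvec[OF X] by (rule carrier_vecI)
  have "tvec (tprod X B) + tvec (tprod A X) = tvec (tprod A X) + tvec (tprod X B)"
    using dim_tvec[OF is_tensor_tprod[OF A X]] dim_tvec[OF is_tensor_tprod[OF X B]]
    by (intro comm_add_vec) (auto intro: carrier_vecI)
  thus ?thesis
    by (simp add: t_sylvester_mat_def kron_bcirc_tilde_mult_tvec[OF B X]
        add_mult_distrib_mat_vec[OF kron_bcirc_tilde_carrier[OF B] khatri_rao_bcirc_carrier X_vec]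
        khatri_rao_bcirc_mult_tvec[OF A X] tvec_tadd[OF is_tensor_tprod[OF A X] is_tensor_tprod[OF X B]])
qed

theorem mainTheorem19:
  fixes A B C :: tensor and n p l :: nat
  assumes "0 < l"
    and "is_tensor n n l A" and "is_tensor p p l B" and "is_tensor n p l C"
    and "\<exists>X. is_tensor n p l X \<and> tadd (tprod A X) (tprod X B) = C"
  shows "\<exists>X. is_tensor n p l X \<and>
           tvec X = mp_inverse (kron (transpose_mat (bcirc_tilde B)) (1\<^sub>m n)
                        + khatri_rao l p p n n (ones_block_id p l) (bcirc A)) *\<^sub>v tvec C \<and>
           tadd (tprod A X) (tprod X B) = C"
proof -
  note A = assms(2) and B = assms(3) and C = assms(4)
  obtain X0 where X0: "is_tensor n p l X0" and X0_sol: "tadd (tprod A X0) (tprod X0 B) = C"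
    using assms(5) by blast
  let ?L = "t_sylvester_mat n p l A B"
  have L: "?L \<in> carrier_mat (l * (n * p)) (l * (n * p))"
    by (rule t_sylvester_mat_carrier)
  have X0_vec: "tvec X0 \<in> carrier_vec (l * (n * p))" and C_vec: "tvec C \<in> carrier_vec (l * (n * p))"
    using dim_tvec[OF X0] dim_tvec[OF C] by (auto intro: carrier_vecI)
  have LX0: "?L *\<^sub>v tvec X0 = tvec C"
    using t_sylvester_mat_mult_tvec[OF A B X0] X0_sol by simp
  have sol: "?L *\<^sub>v (mp_inverse ?L *\<^sub>v tvec C) = tvec C"
    using inner_inverse_solves_consistent[OF L mp_inverse_penrose[OF L] X0_vec] unfolding LX0 .
  obtain Y where Y: "is_tensor n p l Y" and Y_vec: "tvec Y = mp_inverse ?L *\<^sub>v tvec C"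
    using tvec_surjective[OF mult_mat_vec_carrier[OF mp_inverse_penrose(1)[OF L] C_vec]] .
  have "tvec (tadd (tprod A Y) (tprod Y B)) = tvec C"
    using t_sylvester_mat_mult_tvec[OF A B Y] sol unfolding Y_vec by (rule subst)
  hence "tadd (tprod A Y) (tprod Y B) = C"
    by (rule tvec_inject[OF is_tensor_tadd[OF is_tensor_tprod[OF A Y] is_tensor_tprod[OF Y B]] C])
  with Y Y_vec show ?thesis unfolding t_sylvester_mat_def by blast
qed

end
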